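(* Let $m\ge2$, fix real numbers $r_1,\dots,r_m>0$ and integers $i_1,\dots,i_m\ge1$. If $D$ is divisible by $\gcd_j i_j$ and is sufficiently large, then there exist integers $d_1,\dots,d_m\ge1$ with $\gcd(d_1,\dots,d_m)=1$ and $D=d_1i_1+\dots+d_mi_m$ such that for each $\ell$, \[ \Big|d_\ell-\frac{r_\ell D}{i_1r_1+\dots+i_mr_m}\Big|\le (i_1+i_2)J(D)\,1_{\ell\in\{1,2\}}+\sum_{j=2}^m i_j. \]
   Context: $J(D)$ is Jacobsthal's function: the minimal integer such that every interval of this length contains an integer coprime to $D$. *)

theory Defs
  imports Complex_Main
begin

definition jacobsthal :: "nat \<Rightarrow> nat" where
  "jacobsthal D = (LEAST j. \<forall>a::int. \<exists>x\<in>{a+1..a + int j}. coprime x (int D))"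

end

(* Put x_l = r_l D / (i_1 r_1 + ... + i_m r_m), so that sum_l x_l i_l = D, and start from any
   integer solution of sum_l e_l i_l = D.  Shifting e_l (l >= 3) by multiples of i_2, compensated
   in e_2, brings these coordinates within i_2 of x_l.  With g = gcd(i_1, i_2), a = i_1/g,
   b = i_2/g and u b + v a = 1, the moves (e_1, e_2) -> (e_1 + t b, e_2 - t a) keep the sum and
   change u e_1 - v e_2 by exactly t; so among J(D) consecutive values of t one makes
   u e_1 - v e_2 coprime to D, and then gcd(e_1, ..., e_m), which divides D, is 1.  The deviation
   of e_2 is controlled through the linear relation.  Positivity of all e_l for large D needs
   J(D) = o(D): a Legendre sieve gives J(D) <= 4^omega(D) + 1, and 4^omega(D) <= 4^16 sqrt D. *)

theory Submission
  imports Defs "HOL-Computational_Algebra.Primes" "HOL-Real_Asymp.Real_Asymp"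
begin

definition sifted_count :: "int set \<Rightarrow> real \<Rightarrow> real \<Rightarrow> nat" where
  "sifted_count P a b = card {x::int. a < of_int x \<and> of_int x \<le> b \<and> (\<forall>p\<in>P. \<not> p dvd x)}"

lemma ints_between_eq: "{x::int. (a::real) < of_int x \<and> of_int x \<le> (b::real)} = {\<lfloor>a\<rfloor><..\<lfloor>b\<rfloor>}"
  by (auto simp: floor_less_iff le_floor_iff)

lemma finite_ints_between: "finite {x::int. (a::real) < of_int x \<and> of_int x \<le> (b::real) \<and> Q x}"
  by (rule finite_subset[of _ "{\<lfloor>a\<rfloor><..\<lfloor>b\<rfloor>}"]) (auto simp: floor_less_iff le_floor_iff)

lemma card_ints_between_approx:
  assumes "a \<le> b"
  shows "\<bar>real (card {x::int. a < of_int x \<and> of_int x \<le> b}) - (b - a)\<bar> \<le> 1"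
proof -
  have "\<lfloor>a\<rfloor> \<le> \<lfloor>b\<rfloor>"
    using assms by (rule floor_mono)
  then have "real (card {x::int. a < of_int x \<and> of_int x \<le> b}) = of_int \<lfloor>b\<rfloor> - of_int \<lfloor>a\<rfloor>"
    by (simp add: ints_between_eq)
  moreover have "of_int \<lfloor>a\<rfloor> \<le> a" "a < of_int \<lfloor>a\<rfloor> + 1" "of_int \<lfloor>b\<rfloor> \<le> b" "b < of_int \<lfloor>b\<rfloor> + 1"
    by linarith+
  ultimately show ?thesis
    unfolding abs_le_iff by linarith
qed

lemma sifted_count_insert:
  fixes p :: int
  assumes p: "prime p" and P: "\<forall>q\<in>P. prime q" "p \<notin> P"
  shows "sifted_count P a b = sifted_count (insert p P) a b + sifted_count P (a / p) (b / p)"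
proof -
  define A where "A = {x::int. a < of_int x \<and> of_int x \<le> b \<and> (\<forall>q\<in>P. \<not> q dvd x)}"
  define B where "B = {k::int. a / p < of_int k \<and> of_int k \<le> b / p \<and> (\<forall>q\<in>P. \<not> q dvd k)}"
  have "p > 0"
    using p prime_gt_0_int by blast
  have dvd_iff: "q dvd p * k \<longleftrightarrow> q dvd k" "q dvd k * p \<longleftrightarrow> q dvd k" if "q \<in> P" for q k
    using that P p primes_dvd_imp_eq prime_dvd_mult_iff by (metis mult.commute)+
  have "A \<inter> {x. p dvd x} = (*) p ` B"
  proof (intro equalityI subsetI)
    fix x assume "x \<in> A \<inter> {x. p dvd x}"
    then obtain k where "x = p * k" "k \<in> B"
      using \<open>p > 0\<close> by (auto simp: A_def B_def dvd_iff field_simps)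
    then show "x \<in> (*) p ` B" by blast
  qed (use \<open>p > 0\<close> in \<open>auto simp: A_def B_def dvd_iff field_simps\<close>)
  then have "card (A \<inter> {x. p dvd x}) = card B"
    using \<open>p > 0\<close> by (simp add: card_image inj_on_def)
  moreover have "A - {x. p dvd x} = {x::int. a < of_int x \<and> of_int x \<le> b \<and> (\<forall>q\<in>insert p P. \<not> q dvd x)}"
    by (auto simp: A_def)
  ultimately show ?thesis
    using card_Int_Diff[of A "{x. p dvd x}"] finite_ints_between
    by (simp add: sifted_count_def A_def B_def)
qed

lemma sifted_count_approx:
  assumes "finite P" "\<forall>p\<in>P. prime p" "a \<le> b"
  shows "\<bar>real (sifted_count P a b) - (b - a) * (\<Prod>p\<in>P. 1 - 1 / of_int p)\<bar> \<le> 2 ^ card P"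
  using assms
proof (induction P arbitrary: a b rule: finite_induct)
  case empty
  then show ?case
    using card_ints_between_approx[of a b] by (simp add: sifted_count_def)
next
  case (insert p P)
  have "p > 0"
    using insert.prems prime_gt_0_int by auto
  then have "a / p \<le> b / p"
    using insert.prems by (simp add: divide_right_mono)
  then have "\<bar>real (sifted_count P (a / p) (b / p)) - (b / p - a / p) * (\<Prod>q\<in>P. 1 - 1 / of_int q)\<bar>
      \<le> 2 ^ card P"
    using insert.IH insert.prems by blast
  moreover have "\<bar>real (sifted_count P a b) - (b - a) * (\<Prod>q\<in>P. 1 - 1 / of_int q)\<bar> \<le> 2 ^ card P"
    using insert.IH insert.prems by blast
  moreover have "real (sifted_count (insert p P) a b) =
      real (sifted_count P a b) - real (sifted_count P (a / p) (b / p))"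
    using sifted_count_insert[of p P a b] insert by simp
  moreover have "(b - a) * (\<Prod>q\<in>insert p P. 1 - 1 / of_int q) =
      (b - a) * (\<Prod>q\<in>P. 1 - 1 / of_int q) - (b / p - a / p) * (\<Prod>q\<in>P. 1 - 1 / (of_int q::real))"
    using insert.hyps by (simp add: algebra_simps diff_divide_distrib)
  moreover have "(2::real) ^ card (insert p P) = 2 ^ card P + 2 ^ card P"
    using insert.hyps by simp
  ultimately show ?case
    by linarith
qed

lemma coprime_if_no_prime_factor_dvd:
  fixes x n :: int
  assumes "n \<noteq> 0" "\<forall>p\<in>prime_factors n. \<not> p dvd x"
  shows "coprime x n"
proof (rule ccontr)
  assume "\<not> coprime x n"
  then have "\<not> is_unit (gcd x n)" and "gcd x n \<noteq> 0"
    using assms(1) by (auto simp: coprime_iff_gcd_eq_1)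
  then obtain p where "prime p" "p dvd gcd x n"
    using prime_divisor_exists by blast
  then show False
    using assms by (auto simp: in_prime_factors_iff)
qed

lemma sixteen_pow_card_prime_factors_le:
  fixes n :: int
  assumes "n > 0"
  shows "16 ^ card (prime_factors n) \<le> 16 ^ 16 * n"
proof -
  define P where "P = prime_factors n"
  define small where "small = {p\<in>P. p < 16}"
  define large where "large = {p\<in>P. p \<ge> 16}"
  have "finite P"
    by (simp add: P_def)
  have "card P = card small + card large"
    unfolding small_def large_def using \<open>finite P\<close>
    by (subst card_Un_disjoint[symmetric]) (auto intro!: arg_cong[where f = card])
  have "small \<subseteq> {0..<16}"
    by (auto simp: small_def P_def in_prime_factors_iff prime_gt_0_int less_imp_le)
  then have "card small \<le> 16"
    using card_mono[of "{0::int..<16}" small] by simp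
  have "(16::int) ^ card large = (\<Prod>p\<in>large. 16)"
    by simp
  also have "\<dots> \<le> (\<Prod>p\<in>large. p)"
    by (rule prod_mono) (auto simp: large_def)
  also have "\<dots> \<le> n"
  proof (rule zdvd_imp_le)
    have "(\<Prod>p\<in>large. p) dvd (\<Prod>p\<in>P. p ^ multiplicity p n)"
      using \<open>finite P\<close> assms by (intro prod_dvd_prod_subset2)
        (auto simp: large_def P_def in_prime_factors_iff prime_multiplicity_gt_zero_iff intro!: dvd_power)
    then show "(\<Prod>p\<in>large. p) dvd n"
      using assms by (simp add: P_def prod_prime_factors)
  qed (use assms in simp)
  finally have "(16::int) ^ card large \<le> n" .
  moreover have "(16::int) ^ card small \<le> 16 ^ 16"
    using \<open>card small \<le> 16\<close> by (rule power_increasing) simp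
  ultimately show ?thesis
    unfolding P_def[symmetric] \<open>card P = card small + card large\<close> power_add
    by (intro mult_mono) auto
qed

lemma half_pow_card_le_prod_one_minus_inverse:
  assumes "\<forall>p\<in>P. prime p"
  shows "(1 / 2) ^ card P \<le> (\<Prod>p\<in>P. 1 - 1 / (of_int p :: real))"
proof -
  have "(\<Prod>p\<in>P. 1 / 2) \<le> (\<Prod>p\<in>P. 1 - 1 / (of_int p :: real))"
  proof (rule prod_mono)
    fix p assume "p \<in> P"
    then have "(2::real) \<le> of_int p"
      using assms prime_ge_2_int by fastforce
    then show "0 \<le> (1 / 2 :: real) \<and> 1 / 2 \<le> 1 - 1 / (of_int p :: real)"
      by (simp add: field_simps)
  qed
  then show ?thesis
    by simp
qed

definition coprime_in_every_window :: "nat \<Rightarrow> nat \<Rightarrow> bool" where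
  "coprime_in_every_window D J \<longleftrightarrow> (\<forall>a::int. \<exists>x\<in>{a+1..a + int J}. coprime x (int D))"

lemma jacobsthal_eq_Least: "jacobsthal D = (LEAST J. coprime_in_every_window D J)"
  by (simp add: jacobsthal_def coprime_in_every_window_def)

lemma coprime_in_every_window_four_pow:
  assumes "D \<ge> 1"
  shows "coprime_in_every_window D (4 ^ card (prime_factors (int D)) + 1)"
  unfolding coprime_in_every_window_def
proof
  fix a :: int
  define P where "P = prime_factors (int D)"
  define N :: nat where "N = 4 ^ card P + 1"
  have "finite P" and P_prime: "\<forall>p\<in>P. prime p"
    by (auto simp: P_def in_prime_factors_iff)
  have "(1 / 2) ^ card P \<le> (\<Prod>p\<in>P. 1 - 1 / (of_int p :: real))"
    using P_prime by (rule half_pow_card_le_prod_one_minus_inverse)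
  then have "real N * (1 / 2) ^ card P \<le> real N * (\<Prod>p\<in>P. 1 - 1 / (of_int p :: real))"
    by (intro mult_left_mono) auto
  moreover have "(4::real) ^ card P * (1 / 2) ^ card P = 2 ^ card P"
    by (simp flip: power_mult_distrib)
  then have "real N * (1 / 2) ^ card P = 2 ^ card P + (1 / 2) ^ card P"
    by (simp add: N_def distrib_right)
  moreover have "\<bar>real (sifted_count P (of_int a) (of_int a + real N))
      - real N * (\<Prod>p\<in>P. 1 - 1 / of_int p)\<bar> \<le> 2 ^ card P"
    using sifted_count_approx[OF \<open>finite P\<close> P_prime, of "of_int a" "of_int a + real N"] by simp
  moreover have "(0::real) < (1 / 2) ^ card P"
    by simp
  ultimately have "real (sifted_count P (of_int a) (of_int a + real N)) > 0"
    unfolding abs_le_iff by linarith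
  then have "{x::int. of_int a < (of_int x :: real) \<and> of_int x \<le> of_int a + real N
      \<and> (\<forall>p\<in>P. \<not> p dvd x)} \<noteq> {}"
    unfolding sifted_count_def by (metis card.empty of_nat_0 less_irrefl)
  then obtain x :: int where x: "of_int a < (of_int x :: real)" "of_int x \<le> of_int a + real N"
      "\<forall>p\<in>P. \<not> p dvd x"
    by blast
  have "x \<in> {a+1..a + int N}"
    using x(1,2) by simp
  moreover have "coprime x (int D)"
    using coprime_if_no_prime_factor_dvd[of "int D" x] assms x(3) by (simp add: P_def)
  ultimately show "\<exists>x\<in>{a+1..a + int (4 ^ card (prime_factors (int D)) + 1)}. coprime x (int D)"
    by (auto simp: N_def P_def)
qed

lemma jacobsthal_le: "coprime_in_every_window D J \<Longrightarrow> jacobsthal D \<le> J"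
  unfolding jacobsthal_eq_Least by (rule Least_le)

lemma coprime_in_every_window_jacobsthal:
  "D \<ge> 1 \<Longrightarrow> coprime_in_every_window D (jacobsthal D)"
  unfolding jacobsthal_eq_Least by (rule LeastI) (rule coprime_in_every_window_four_pow)

lemma jacobsthal_le_sqrt:
  assumes "D \<ge> 1"
  shows "real (jacobsthal D) \<le> 4 ^ 16 * sqrt (real D) + 1"
proof -
  define k where "k = card (prime_factors (int D))"
  have "(16::int) ^ k \<le> 16 ^ 16 * int D"
    unfolding k_def using assms by (intro sixteen_pow_card_prime_factors_le) simp
  then have "real_of_int (16 ^ k) \<le> real_of_int (16 ^ 16 * int D)"
    by (simp only: of_int_le_iff)
  then have "sqrt (16 ^ k) \<le> sqrt (16 ^ 16 * real D)"
    by (intro real_sqrt_le_mono) simp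
  then have "sqrt 16 ^ k \<le> sqrt 16 ^ 16 * sqrt (real D)"
    by (simp only: real_sqrt_mult real_sqrt_power)
  moreover have "sqrt 16 = (4::real)"
    using real_sqrt_abs[of 4] by simp
  ultimately have "(4::real) ^ k \<le> 4 ^ 16 * sqrt (real D)"
    by simp
  moreover have "jacobsthal D \<le> 4 ^ k + 1"
    unfolding k_def using assms by (intro jacobsthal_le coprime_in_every_window_four_pow)
  then have "real (jacobsthal D) \<le> real (4 ^ k + 1)"
    by (simp only: of_nat_le_iff)
  ultimately show ?thesis
    by simp
qed

lemma eventually_jacobsthal_margin:
  fixes A B :: real and c :: "'a \<Rightarrow> real"
  assumes "finite L" "A \<ge> 0" "\<forall>l\<in>L. c l > 0"
  shows "\<forall>\<^sub>F D in sequentially. D \<ge> 1 \<and> (\<forall>l\<in>L. A * real (jacobsthal D) + B < c l * real D)"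
proof (intro eventually_conj eventually_ge_at_top eventually_ball_finite ballI)
  fix l assume "l \<in> L"
  then have "c l > 0"
    using assms(3) by blast
  then have "\<forall>\<^sub>F D in sequentially. A * (4 ^ 16 * sqrt (real D) + 1) + B < c l * real D"
    using assms(2) by real_asymp
  moreover have "\<forall>\<^sub>F D in sequentially. D \<ge> 1"
    by (rule eventually_ge_at_top)
  ultimately show "\<forall>\<^sub>F D in sequentially. A * real (jacobsthal D) + B < c l * real D"
  proof eventually_elim
    case (elim D)
    then show ?case
      using mult_left_mono[OF jacobsthal_le_sqrt[of D] \<open>A \<ge> 0\<close>] by linarith
  qed
qed (use assms(1) in simp)

lemma int_Gcd_image_eq_lincomb:
  fixes i :: "'a \<Rightarrow> nat"
  assumes "finite F"
  shows "\<exists>c. int (Gcd (i ` F)) = (\<Sum>l\<in>F. c l * int (i l))"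
  using assms
proof (induction F rule: finite_induct)
  case empty
  show ?case by simp
next
  case (insert j F)
  then obtain c where c: "int (Gcd (i ` F)) = (\<Sum>l\<in>F. c l * int (i l))"
    by blast
  obtain u v where uv: "u * int (i j) + v * int (Gcd (i ` F)) = gcd (int (i j)) (int (Gcd (i ` F)))"
    using bezout_int by blast
  define c' where "c' = (\<lambda>l. if l = j then u else v * c l)"
  have "(\<Sum>l\<in>F. c' l * int (i l)) = v * (\<Sum>l\<in>F. c l * int (i l))"
    unfolding c'_def using insert by (auto simp: sum_distrib_left mult.assoc intro!: sum.cong)
  then have "(\<Sum>l\<in>insert j F. c' l * int (i l)) = u * int (i j) + v * int (Gcd (i ` F))"
    using insert c by (simp add: c'_def)
  also have "\<dots> = int (Gcd (i ` insert j F))"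
    using uv by simp
  finally show ?case
    by metis
qed

lemma exists_int_solution:
  fixes i :: "'a \<Rightarrow> nat"
  assumes "finite F" "Gcd (i ` F) dvd D"
  shows "\<exists>y. (\<Sum>l\<in>F. y l * int (i l)) = int D"
proof -
  obtain c where c: "int (Gcd (i ` F)) = (\<Sum>l\<in>F. c l * int (i l))"
    using int_Gcd_image_eq_lincomb[OF assms(1)] by blast
  obtain q where q: "D = Gcd (i ` F) * q"
    using assms(2) by blast
  define y where "y l = int q * c l" for l
  have "(\<Sum>l\<in>F. y l * int (i l)) = int q * int (Gcd (i ` F))"
    by (simp add: y_def c sum_distrib_left mult.assoc)
  also have "\<dots> = int D"
    using q by simp
  finally show ?thesis
    by blast
qed

lemma sum_split_first_two:
  fixes f :: "nat \<Rightarrow> 'a::comm_monoid_add"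
  assumes "m \<ge> 2"
  shows "(\<Sum>l=1..m. f l) = f 1 + f 2 + (\<Sum>l=3..m. f l)"
proof -
  have "{1..m} = insert 1 (insert 2 {3..m})"
    using assms by auto
  then show ?thesis
    by (simp add: add.assoc)
qed

lemma shift_tail_near:
  fixes y :: "nat \<Rightarrow> int" and x :: "nat \<Rightarrow> real" and i :: "nat \<Rightarrow> nat"
  assumes "m \<ge> 2" "i 2 > 0"
  shows "\<exists>e. (\<Sum>l=1..m. e l * int (i l)) = (\<Sum>l=1..m. y l * int (i l))
    \<and> (\<forall>l\<in>{3..m}. \<bar>of_int (e l) - x l\<bar> \<le> real (i 2))"
proof -
  define k where "k l = \<lfloor>(x l - of_int (y l)) / real (i 2)\<rfloor>" for l
  define e where "e l = (if l = 2 then y 2 - (\<Sum>j=3..m. k j * int (i j))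
    else if l \<ge> 3 then y l + k l * int (i 2) else y l)" for l
  have "(\<Sum>l=3..m. e l * int (i l)) = (\<Sum>l=3..m. y l * int (i l) + int (i 2) * (k l * int (i l)))"
    by (rule sum.cong) (auto simp: e_def algebra_simps)
  then have "(\<Sum>l=1..m. e l * int (i l)) = (\<Sum>l=1..m. y l * int (i l))"
    unfolding sum_split_first_two[OF assms(1)]
    by (simp add: e_def sum.distrib sum_distrib_left algebra_simps)
  moreover have "\<bar>of_int (e l) - x l\<bar> \<le> real (i 2)" if "l \<in> {3..m}" for l
  proof -
    have "of_int (k l) \<le> (x l - of_int (y l)) / real (i 2)"
      "(x l - of_int (y l)) / real (i 2) < of_int (k l) + 1"
      unfolding k_def by linarith+
    then have "of_int (k l) * real (i 2) \<le> x l - of_int (y l)"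
      "x l - of_int (y l) < (of_int (k l) + 1) * real (i 2)"
      using assms(2) by (simp_all add: field_simps)
    then show ?thesis
      using that by (simp add: e_def algebra_simps)
  qed
  ultimately show ?thesis
    by (intro exI[of _ e]) (auto simp: e_def)
qed

lemma reduced_ratio_bezout:
  fixes i1 i2 :: nat
  assumes "i2 > 0"
  shows "\<exists>a b u v :: int. int i1 * b = int i2 * a \<and> 0 < b \<and> b \<le> int i2 \<and> u * b + v * a = 1"
proof -
  define g where "g = gcd (int i1) (int i2)"
  define a where "a = int i1 div g"
  define b where "b = int i2 div g"
  have "g > 0"
    using assms by (simp add: g_def)
  have i1: "int i1 = a * g" and i2: "int i2 = b * g"
    by (simp_all add: a_def b_def g_def)
  then have "b > 0"
    using \<open>g > 0\<close> assms by (metis of_nat_0_less_iff zero_less_mult_pos2)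
  then have "b \<le> int i2"
    using \<open>g > 0\<close> i2 by (simp add: mult_le_cancel_left1)
  have "coprime b a"
    unfolding a_def b_def g_def using assms
    by (metis div_gcd_coprime coprime_commute of_nat_eq_0_iff not_gr0)
  then obtain u v where "u * b + v * a = 1"
    using bezout_int[of b a] by (auto simp: coprime_iff_gcd_eq_1)
  moreover have "int i1 * b = int i2 * a"
    by (simp add: i1 i2)
  ultimately show ?thesis
    using \<open>b > 0\<close> \<open>b \<le> int i2\<close> by blast
qed

lemma progression_term_near:
  fixes x :: real and y b t :: int
  assumes "b > 0" "\<lceil>(x - of_int y) / of_int b\<rceil> \<le> t" "t < \<lceil>(x - of_int y) / of_int b\<rceil> + int J"
  shows "x \<le> of_int (y + t * b)" "of_int (y + t * b) \<le> x + of_int b * real J"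
proof -
  define t0 where "t0 = \<lceil>(x - of_int y) / of_int b\<rceil>"
  have "(x - of_int y) / of_int b \<le> of_int t0" "of_int t0 - 1 < (x - of_int y) / of_int b"
    unfolding t0_def using ceiling_correct by blast+
  then have "x - of_int y \<le> of_int t0 * of_int b" "of_int t0 * of_int b - of_int b < x - of_int y"
    using assms(1) by (simp_all add: field_simps)
  moreover have t: "of_int t0 \<le> (of_int t :: real)" "of_int t \<le> of_int t0 + real J - (1 :: real)"
    using assms(2,3) by (simp_all add: t0_def)
  then have "of_int t0 * of_int b \<le> (of_int t * of_int b :: real)"
    using assms(1) by (simp add: mult_right_mono)
  moreover have "of_int t * of_int b \<le> (of_int t0 + real J - 1) * (of_int b :: real)"
    using t assms(1) by (simp add: mult_right_mono)
  moreover have "(of_int t0 + real J - 1) * (of_int b :: real)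
      = of_int t0 * of_int b + of_int b * real J - of_int b"
    by (simp add: algebra_simps)
  ultimately show "x \<le> of_int (y + t * b)" "of_int (y + t * b) \<le> x + of_int b * real J"
    unfolding of_int_add of_int_mult by linarith+
qed

lemma exists_shift_with_coprime_gcd:
  fixes i1 i2 :: nat and y1 y2 :: int and x1 :: real
  assumes "i2 > 0" "coprime_in_every_window D J"
  shows "\<exists>e1 e2. e1 * int i1 + e2 * int i2 = y1 * int i1 + y2 * int i2
    \<and> coprime (gcd e1 e2) (int D) \<and> x1 \<le> of_int e1 \<and> of_int e1 \<le> x1 + real (i2 * J)"
proof -
  obtain a b u v where ab: "int i1 * b = int i2 * a" and "b > 0" "b \<le> int i2"
    and uv: "u * b + v * a = 1"
    using reduced_ratio_bezout[OF assms(1)] by blast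
  define t0 where "t0 = \<lceil>(x1 - of_int y1) / of_int b\<rceil>"
  define z0 where "z0 = u * y1 - v * y2"
  obtain z where z: "z \<in> {z0 + t0 - 1 + 1..z0 + t0 - 1 + int J}" and "coprime z (int D)"
    using assms(2) unfolding coprime_in_every_window_def by blast
  define t where "t = z - z0"
  define e1 where "e1 = y1 + t * b"
  define e2 where "e2 = y2 - t * a"
  have "e1 * int i1 + e2 * int i2 = y1 * int i1 + y2 * int i2"
    using ab by (simp add: e1_def e2_def algebra_simps)
  moreover have "coprime (gcd e1 e2) (int D)"
  proof -
    have "gcd e1 e2 dvd u * e1 - v * e2"
      by (intro dvd_diff dvd_mult) simp_all
    also have "u * e1 - v * e2 = z0 + t * (u * b + v * a)"
      by (simp add: e1_def e2_def z0_def algebra_simps)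
    also have "\<dots> = z"
      using uv by (simp add: t_def)
    finally have "gcd e1 e2 dvd z" .
    then show ?thesis
      using \<open>coprime z (int D)\<close> by (rule coprime_divisors[OF _ dvd_refl])
  qed
  moreover have "x1 \<le> of_int e1 \<and> of_int e1 \<le> x1 + real (i2 * J)"
  proof -
    have "t0 \<le> t" "t < t0 + int J"
      using z by (auto simp: t_def)
    with \<open>b > 0\<close> have "x1 \<le> of_int e1" "of_int e1 \<le> x1 + of_int b * real J"
      unfolding e1_def t0_def by (rule progression_term_near)+
    moreover have "of_int b * real J \<le> real (i2 * J)"
      using \<open>b \<le> int i2\<close> by (simp add: mult_right_mono)
    ultimately show ?thesis
      by linarith
  qed
  ultimately show ?thesis
    by blast
qed

lemma deviation_balance:
  fixes e x :: "nat \<Rightarrow> real" and i :: "nat \<Rightarrow> nat"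
  assumes "m \<ge> 2" "(\<Sum>l=1..m. e l * i l) = (\<Sum>l=1..m. x l * i l)"
  shows "\<bar>e 2 - x 2\<bar> * i 2 \<le> \<bar>e 1 - x 1\<bar> * i 1 + (\<Sum>l=3..m. \<bar>e l - x l\<bar> * i l)"
proof -
  have "(\<Sum>l=1..m. (e l - x l) * i l) = 0"
    using assms(2) by (simp add: left_diff_distrib sum_subtractf)
  then have "(e 2 - x 2) * i 2 = - ((e 1 - x 1) * i 1) - (\<Sum>l=3..m. (e l - x l) * i l)"
    unfolding sum_split_first_two[OF assms(1)] by linarith
  then have "\<bar>(e 2 - x 2) * i 2\<bar> \<le> \<bar>(e 1 - x 1) * i 1\<bar> + \<bar>\<Sum>l=3..m. (e l - x l) * i l\<bar>"
    using abs_triangle_ineq4[of "- ((e 1 - x 1) * i 1)"] by simp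
  moreover have "\<bar>\<Sum>l=3..m. (e l - x l) * i l\<bar> \<le> (\<Sum>l=3..m. \<bar>e l - x l\<bar> * i l)"
    using sum_abs[of "\<lambda>l. (e l - x l) * i l" "{3..m}"] by (simp add: abs_mult)
  ultimately show ?thesis
    by (simp add: abs_mult)
qed

lemma deviation_second_le:
  fixes e x :: "nat \<Rightarrow> real" and i :: "nat \<Rightarrow> nat" and c :: real
  assumes "m \<ge> 2" "i 2 > 0" "(\<Sum>l=1..m. e l * i l) = (\<Sum>l=1..m. x l * i l)"
    and "\<bar>e 1 - x 1\<bar> \<le> i 2 * c" "\<forall>l\<in>{3..m}. \<bar>e l - x l\<bar> \<le> i 2"
  shows "\<bar>e 2 - x 2\<bar> \<le> i 1 * c + (\<Sum>l=3..m. real (i l))"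
proof -
  have "\<bar>e 2 - x 2\<bar> * i 2 \<le> \<bar>e 1 - x 1\<bar> * i 1 + (\<Sum>l=3..m. \<bar>e l - x l\<bar> * i l)"
    using deviation_balance[OF assms(1,3)] .
  also have "\<dots> \<le> i 2 * c * i 1 + (\<Sum>l=3..m. real (i 2) * i l)"
    using assms(4,5) by (intro add_mono mult_right_mono sum_mono) auto
  also have "\<dots> = i 2 * (i 1 * c + (\<Sum>l=3..m. real (i l)))"
    by (simp add: sum_distrib_left algebra_simps)
  finally show ?thesis
    using assms(2) by (simp add: mult.commute[of _ "real (i 2)"])
qed

lemma exists_int_solution_near:
  fixes x :: "nat \<Rightarrow> real" and i :: "nat \<Rightarrow> nat"
  assumes "m \<ge> 2" "i 2 > 0" "Gcd (i ` {1..m}) dvd D" "(\<Sum>l=1..m. x l * i l) = D"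
    and "coprime_in_every_window D J"
  shows "\<exists>e. (\<Sum>l=1..m. e l * int (i l)) = int D \<and> coprime (gcd (e 1) (e 2)) (int D)
    \<and> (\<forall>l\<in>{1..m}. \<bar>of_int (e l) - x l\<bar>
          \<le> (if l \<in> {1,2} then real ((i 1 + i 2) * J) else 0) + real (\<Sum>j=2..m. i j))"
proof -
  obtain y where "(\<Sum>l=1..m. y l * int (i l)) = int D"
    using exists_int_solution[OF _ assms(3)] by auto
  then obtain y' where y': "(\<Sum>l=1..m. y' l * int (i l)) = int D"
    and tail: "\<forall>l\<in>{3..m}. \<bar>of_int (y' l) - x l\<bar> \<le> real (i 2)"
    using shift_tail_near[of m i y x] assms(1,2) by auto
  obtain e1 e2 where e12: "e1 * int (i 1) + e2 * int (i 2) = y' 1 * int (i 1) + y' 2 * int (i 2)"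
    and "coprime (gcd e1 e2) (int D)" and e1: "x 1 \<le> of_int e1" "of_int e1 \<le> x 1 + real (i 2 * J)"
    using exists_shift_with_coprime_gcd[OF assms(2,5), of "i 1" "y' 1" "y' 2" "x 1"] by blast
  define e where "e = y'(1 := e1, 2 := e2)"
  have "(\<Sum>l=3..m. e l * int (i l)) = (\<Sum>l=3..m. y' l * int (i l))"
    by (rule sum.cong) (auto simp: e_def)
  then have e_sum: "(\<Sum>l=1..m. e l * int (i l)) = int D"
    using y' e12 unfolding sum_split_first_two[OF assms(1)] by (simp add: e_def)
  have dev1: "\<bar>of_int (e 1) - x 1\<bar> \<le> real (i 2) * J"
    using e1 by (simp add: e_def)
  have dev3: "\<bar>of_int (e l) - x l\<bar> \<le> real (i 2)" if "l \<in> {3..m}" for l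
    using tail that by (simp add: e_def)
  have "(\<Sum>l=1..m. real_of_int (e l) * real (i l)) = real_of_int (\<Sum>l=1..m. e l * int (i l))"
    by simp
  also have "\<dots> = (\<Sum>l=1..m. x l * real (i l))"
    using e_sum assms(4) by simp
  finally have "\<bar>of_int (e 2) - x 2\<bar> \<le> real (i 1) * J + (\<Sum>l=3..m. real (i l))"
    using deviation_second_le[of m i "\<lambda>l. of_int (e l)" x "real J"] assms(1,2) dev1 dev3 by blast
  moreover have "real (\<Sum>j=2..m. i j) = real (i 2) + (\<Sum>l=3..m. real (i l))"
    using assms(1) by (simp add: sum.atLeast_Suc_atMost[of 2 m] numeral_3_eq_3)
  ultimately have dev: "\<bar>of_int (e l) - x l\<bar>
      \<le> (if l \<in> {1,2} then real ((i 1 + i 2) * J) else 0) + real (\<Sum>j=2..m. i j)"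
    if "l \<in> {1..m}" for l
    using that dev1 dev3[of l] sum_nonneg[of "{3..m}" "\<lambda>l. real (i l)"]
    by (cases "l \<ge> 3") (auto simp: distrib_right)
  moreover have "coprime (gcd (e 1) (e 2)) (int D)"
    using \<open>coprime (gcd e1 e2) (int D)\<close> by (simp add: e_def)
  ultimately show ?thesis
    using e_sum by blast
qed

lemma Gcd_image_eq_1_if_coprime_gcd:
  fixes d i :: "'a \<Rightarrow> nat"
  assumes "coprime (gcd (d j) (d k)) (\<Sum>l\<in>F. d l * i l)" "j \<in> F" "k \<in> F"
  shows "Gcd (d ` F) = 1"
proof -
  have "Gcd (d ` F) dvd gcd (d j) (d k)"
    using assms(2,3) by simp
  moreover have "Gcd (d ` F) dvd (\<Sum>l\<in>F. d l * i l)"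
    by (intro dvd_sum) simp
  ultimately show ?thesis
    using assms(1) coprime_common_divisor_nat by blast
qed

lemma exists_coprime_nat_solution_near:
  fixes x :: "nat \<Rightarrow> real" and i :: "nat \<Rightarrow> nat"
  assumes "m \<ge> 2" "i 2 > 0" "Gcd (i ` {1..m}) dvd D" "(\<Sum>l=1..m. x l * i l) = D"
    and "coprime_in_every_window D J"
    and "\<forall>l\<in>{1..m}. real ((i 1 + i 2) * J) + real (\<Sum>j=2..m. i j) < x l"
  shows "\<exists>d. (\<forall>l\<in>{1..m}. d l \<ge> 1) \<and> Gcd (d ` {1..m}) = 1 \<and> D = (\<Sum>l=1..m. d l * i l)
    \<and> (\<forall>l\<in>{1..m}. \<bar>real (d l) - x l\<bar>
          \<le> (if l \<in> {1,2} then real ((i 1 + i 2) * J) else 0) + real (\<Sum>j=2..m. i j))"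
proof -
  obtain e where e_sum: "(\<Sum>l=1..m. e l * int (i l)) = int D"
    and cop: "coprime (gcd (e 1) (e 2)) (int D)"
    and dev: "\<forall>l\<in>{1..m}. \<bar>of_int (e l) - x l\<bar>
      \<le> (if l \<in> {1,2} then real ((i 1 + i 2) * J) else 0) + real (\<Sum>j=2..m. i j)"
    using exists_int_solution_near[OF assms(1-5)] by blast
  have e_pos: "e l \<ge> 1" if "l \<in> {1..m}" for l
  proof -
    have "(if l \<in> {1,2} then real ((i 1 + i 2) * J) else 0) \<le> real ((i 1 + i 2) * J)"
      by simp
    then have "(0::real) < of_int (e l)"
      using dev assms(6) that by fastforce
    then show ?thesis
      by simp
  qed
  define d where "d l = nat (e l)" for l
  have de: "int (d l) = e l" if "l \<in> {1..m}" for l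
    using e_pos[OF that] by (simp add: d_def)
  have "int (\<Sum>l=1..m. d l * i l) = int D"
    using e_sum by (simp add: de)
  then have d_sum: "D = (\<Sum>l=1..m. d l * i l)"
    by linarith
  have "coprime (gcd (d 1) (d 2)) D"
    using cop de[of 1, symmetric] de[of 2, symmetric] assms(1) by simp
  moreover have "1 \<in> {1..m}" "2 \<in> {1..m}"
    using assms(1) by auto
  ultimately have "Gcd (d ` {1..m}) = 1"
    unfolding d_sum by (rule Gcd_image_eq_1_if_coprime_gcd)
  moreover have "real (d l) = of_int (e l)" if "l \<in> {1..m}" for l
    using de[OF that] by (metis of_int_of_nat_eq)
  moreover have "d l \<ge> 1" if "l \<in> {1..m}" for l
    using de[OF that] e_pos[OF that] by linarith
  ultimately show ?thesis
    using d_sum dev by (intro exI[of _ d]) simp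
qed

theorem lemma3p2:
  fixes m :: nat and r :: "nat \<Rightarrow> real" and i :: "nat \<Rightarrow> nat"
  assumes "m \<ge> 2"
    and "\<forall>j\<in>{1..m}. r j > 0"
    and "\<forall>j\<in>{1..m}. i j \<ge> 1"
  shows "\<exists>D0::nat. \<forall>D\<ge>D0. Gcd (i ` {1..m}) dvd D \<longrightarrow>
           (\<exists>d :: nat \<Rightarrow> nat.
              (\<forall>l\<in>{1..m}. d l \<ge> 1) \<and>
              Gcd (d ` {1..m}) = 1 \<and>
              D = (\<Sum>l=1..m. d l * i l) \<and>
              (\<forall>l\<in>{1..m}.
                 \<bar>real (d l) - r l * real D / (\<Sum>j=1..m. real (i j) * r j)\<bar>
                   \<le> (if l \<in> {1,2} then real ((i 1 + i 2) * jacobsthal D) else 0)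
                      + real (\<Sum>j=2..m. i j)))"
proof -
  define S where "S = (\<Sum>j=1..m. real (i j) * r j)"
  have "S > 0"
    unfolding S_def using assms by (intro sum_pos) (auto simp: Suc_le_eq)
  obtain D0 where D0: "\<And>D. D \<ge> D0 \<Longrightarrow> D \<ge> 1 \<and> (\<forall>l\<in>{1..m}.
      real ((i 1 + i 2) * jacobsthal D) + real (\<Sum>j=2..m. i j) < r l * real D / S)"
    using eventually_jacobsthal_margin[of "{1..m}" "real (i 1 + i 2)" "\<lambda>l. r l / S"
        "real (\<Sum>j=2..m. i j)"] assms(2) \<open>S > 0\<close>
    unfolding eventually_sequentially by auto
  show ?thesis
    unfolding S_def[symmetric]
  proof (intro exI[of _ D0] allI impI)
    fix D assume "D \<ge> D0" "Gcd (i ` {1..m}) dvd D"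
    moreover have "(\<Sum>l=1..m. r l * real D / S * i l) = D"
      using \<open>S > 0\<close> by (simp add: S_def sum_divide_distrib[symmetric] sum_distrib_left[symmetric] mult_ac)
    ultimately show "\<exists>d. (\<forall>l\<in>{1..m}. d l \<ge> 1) \<and> Gcd (d ` {1..m}) = 1 \<and> D = (\<Sum>l=1..m. d l * i l)
      \<and> (\<forall>l\<in>{1..m}. \<bar>real (d l) - r l * real D / S\<bar>
          \<le> (if l \<in> {1,2} then real ((i 1 + i 2) * jacobsthal D) else 0) + real (\<Sum>j=2..m. i j))"
      using exists_coprime_nat_solution_near[of m i D "\<lambda>l. r l * real D / S" "jacobsthal D"]
        coprime_in_every_window_jacobsthal[of D] D0 assms(1,3)
      by (simp add: Suc_le_eq)
  qed
qed

end
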